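(* Let $F\colon\mathbb{R}^n\to\mathbb{R}^n$ be a polynomial map, let $g_1,\dots,g_r,h_1,\dots,h_s$ be real polynomials on $\mathbb{R}^n$ with $\Omega:=\{x: g_i(x)\le0\ \forall i,\ h_j(x)=0\ \forall j\}$ nonempty, fix $\rho>0$, let $\phi(x,y):=\langle F(x),x-y\rangle-\frac{\rho}{2}\|x-y\|^2$, $\psi(x):=\sup_{y\in\Omega}\phi(x,y)$, and $\Omega(x):=\{y\in\Omega:\psi(x)=\phi(x,y)\}$. Assume (MFCQ) holds on $\Omega$. Then for all $x\in\mathbb{R}^n$, $$\partial^\circ\psi(x)\subset\mathrm{co}\Big(\bigcup_{y\in\Omega(x)}\{v\in\mathbb{R}^n: (v,0)\in\nabla\phi(x,y)-\{0\}\times N(\Omega,y)\}\Big).$$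
   Context: $\psi$ is locally Lipschitz; $\partial^\circ\psi(x)$ is its Clarke subdifferential $\mathrm{co}\{\lim_k\nabla\psi(x^k):x^k\to x,\ \psi\text{ differentiable at }x^k\}$; $\mathrm{co}$ denotes convex hull. $\nabla\phi(x,y)$ is the full gradient in $\mathbb{R}^n\times\mathbb{R}^n$. For $y\in\Omega$, $N(\Omega,y):=\{\sum_{i=1}^r\mu_i\nabla g_i(y)+\sum_{j=1}^s\kappa_j\nabla h_j(y): \mu_i,\kappa_j\in\mathbb{R},\ \mu_i\ge0,\ \mu_i g_i(y)=0\}$. (MFCQ) holds on $\Omega$ means: for every $x\in\Omega$, the vectors $\nabla h_j(x)$ are linearly independent and there exists $v$ with $\langle\nabla g_i(x),v\rangle<0$ for all $i$ with $g_i(x)=0$ and $\langle\nabla h_j(x),v\rangle=0$ for all $j$. *)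

theory Defs
  imports "HOL-Analysis.Analysis"
begin

inductive_set poly_fun :: "(real^'n \<Rightarrow> real) set" where
  pf_const: "(\<lambda>x. c) \<in> poly_fun"
| pf_coord: "(\<lambda>x. x $ i) \<in> poly_fun"
| pf_add: "p \<in> poly_fun \<Longrightarrow> q \<in> poly_fun \<Longrightarrow> (\<lambda>x. p x + q x) \<in> poly_fun"
| pf_mult: "p \<in> poly_fun \<Longrightarrow> q \<in> poly_fun \<Longrightarrow> (\<lambda>x. p x * q x) \<in> poly_fun"

definition poly_map :: "(real^'n \<Rightarrow> real^'n) \<Rightarrow> bool" where
  "poly_map F \<longleftrightarrow> (\<forall>i. (\<lambda>x. F x $ i) \<in> poly_fun)"

definition grad :: "('a::real_inner \<Rightarrow> real) \<Rightarrow> 'a \<Rightarrow> 'a" where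
  "grad f x = (THE D. GDERIV f x :> D)"

definition clarke_subdiff :: "('a::euclidean_space \<Rightarrow> real) \<Rightarrow> 'a \<Rightarrow> 'a set" where
  "clarke_subdiff f x = convex hull
     {v. \<exists>xs gs. xs \<longlonglongrightarrow> x \<and> (\<forall>k. GDERIV f (xs k) :> gs k) \<and> gs \<longlonglongrightarrow> v}"

definition feas :: "(nat \<Rightarrow> 'a \<Rightarrow> real) \<Rightarrow> nat \<Rightarrow> (nat \<Rightarrow> 'a \<Rightarrow> real) \<Rightarrow> nat \<Rightarrow> 'a set" where
  "feas g r h s = {x. (\<forall>i<r. g i x \<le> 0) \<and> (\<forall>j<s. h j x = 0)}"

definition normal_cone :: "(nat \<Rightarrow> 'a::real_inner \<Rightarrow> real) \<Rightarrow> nat \<Rightarrow> (nat \<Rightarrow> 'a \<Rightarrow> real) \<Rightarrow> nat \<Rightarrow> 'a \<Rightarrow> 'a set" where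
  "normal_cone g r h s y =
     {(\<Sum>i<r. \<mu> i *\<^sub>R grad (g i) y) + (\<Sum>j<s. \<kappa> j *\<^sub>R grad (h j) y) | \<mu> \<kappa>.
        (\<forall>i<r. \<mu> i \<ge> 0 \<and> \<mu> i * g i y = 0)}"

definition MFCQ :: "(nat \<Rightarrow> 'a::real_inner \<Rightarrow> real) \<Rightarrow> nat \<Rightarrow> (nat \<Rightarrow> 'a \<Rightarrow> real) \<Rightarrow> nat \<Rightarrow> bool" where
  "MFCQ g r h s \<longleftrightarrow> (\<forall>x \<in> feas g r h s.
     (\<forall>c. (\<Sum>j<s. c j *\<^sub>R grad (h j) x) = 0 \<longrightarrow> (\<forall>j<s. c j = 0)) \<and>
     (\<exists>v. (\<forall>i<r. g i x = 0 \<longrightarrow> grad (g i) x \<bullet> v < 0) \<and> (\<forall>j<s. grad (h j) x \<bullet> v = 0)))"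

end

theory Submission
  imports Defs
begin

text \<open>At a point \<open>x\<^sub>k\<close> where \<open>\<psi>\<close> is differentiable and \<open>y\<^sub>k\<close> maximizes
\<open>\<phi>(x\<^sub>k, \<cdot>)\<close> over \<open>\<Omega>\<close>, the function \<open>\<psi> - \<phi>(\<cdot>, y\<^sub>k)\<close> is minimal at \<open>x\<^sub>k\<close>, so
\<open>\<nabla>\<psi>(x\<^sub>k) = \<nabla>\<^sub>x\<phi>(x\<^sub>k, y\<^sub>k)\<close> (Danskin). The strongly concave quadratic term keeps the
maximizers bounded, so along a subsequence \<open>y\<^sub>k \<rightarrow> y\<close> with \<open>y \<in> \<Omega>(x)\<close>, and a limit \<open>v\<close> of
gradients of \<open>\<psi>\<close> equals \<open>\<nabla>\<^sub>x\<phi>(x, y)\<close>. Since \<open>y\<close> maximizes \<open>\<phi>(x, \<cdot>)\<close> on \<open>\<Omega>\<close> and MFCQ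
holds there, the KKT conditions give \<open>\<nabla>\<^sub>y\<phi>(x, y) \<in> N(\<Omega>, y)\<close>. KKT itself is obtained by the
quadratic penalty method: penalized minimizers yield approximate KKT points, normalizing their
multipliers gives Fritz John multipliers in the limit, and MFCQ rules out a vanishing
multiplier of the objective.\<close>

section \<open>Continuously differentiable functions\<close>

lemma gderiv_unique:
  assumes "GDERIV f x :> D" "GDERIV f x :> D'" shows "D = D'"
proof -
  have "(\<lambda>h. h \<bullet> D) = (\<lambda>h. h \<bullet> D')"
    using assms unfolding gderiv_def by (rule has_derivative_unique)
  then have "(D - D') \<bullet> D = (D - D') \<bullet> D'" by metis
  then have "(D - D') \<bullet> (D - D') = 0" by (simp add: inner_diff_right)
  then show ?thesis by simp
qed

lemma grad_eqI: "GDERIV f x :> D \<Longrightarrow> grad f x = D"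
  unfolding grad_def using gderiv_unique by blast

lemma GDERIV_sum:
  "finite A \<Longrightarrow> (\<And>i. i \<in> A \<Longrightarrow> GDERIV (f i) x :> D i) \<Longrightarrow>
     GDERIV (\<lambda>x. \<Sum>i\<in>A. f i x) x :> (\<Sum>i\<in>A. D i)"
  by (induction A rule: finite_induct) (auto intro: GDERIV_add GDERIV_const)

lemma gderiv_local_min_eq_0:
  assumes "GDERIV f x :> D" "\<forall>\<^sub>F y in at x. f x \<le> f y"
  shows "D = 0"
proof -
  have "(\<lambda>h. h \<bullet> D) = (\<lambda>h. 0)"
    using assms unfolding gderiv_def by (rule has_derivative_local_min)
  then have "D \<bullet> D = 0" by metis
  then show ?thesis by simp
qed

lemma gderiv_eq_if_touching_from_below:
  assumes "GDERIV f x :> D" "GDERIV g x :> E" "\<And>y. g y \<le> f y" "f x = g x"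
  shows "D = E"
proof -
  have "GDERIV (\<lambda>y. f y - g y) x :> D - E"
    using assms(1,2) by (rule GDERIV_diff)
  moreover have "\<forall>\<^sub>F y in at x. f x - g x \<le> f y - g y"
    using assms(3,4) by (simp add: always_eventually)
  ultimately have "D - E = 0" by (rule gderiv_local_min_eq_0)
  then show ?thesis by simp
qed

definition C1_fun :: "('a::real_inner \<Rightarrow> real) \<Rightarrow> bool" where
  "C1_fun f \<longleftrightarrow> (\<exists>G. continuous_on UNIV G \<and> (\<forall>x. GDERIV f x :> G x))"

lemma C1_funI:
  "continuous_on UNIV G \<Longrightarrow> (\<And>x. GDERIV f x :> G x) \<Longrightarrow> C1_fun f"
  unfolding C1_fun_def by blast

lemma
  assumes "C1_fun f"
  shows C1_fun_gderiv: "GDERIV f x :> grad f x"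
    and C1_fun_isCont_grad: "isCont (grad f) x"
proof -
  obtain G where G: "continuous_on UNIV G" "\<And>x. GDERIV f x :> G x"
    using assms unfolding C1_fun_def by blast
  have "grad f = G" using G(2) grad_eqI by blast
  then show "GDERIV f x :> grad f x" "isCont (grad f) x"
    using G by (auto simp: continuous_on_eq_continuous_at)
qed

lemma C1_fun_isCont: "C1_fun f \<Longrightarrow> isCont f x"
  using C1_fun_gderiv unfolding gderiv_def by (meson has_derivative_continuous)

lemma C1_fun_continuous_on: "C1_fun f \<Longrightarrow> continuous_on S f"
  by (simp add: C1_fun_isCont continuous_at_imp_continuous_on)

lemma C1_fun_const: "C1_fun (\<lambda>x. c)"
  by (rule C1_funI[of "\<lambda>x. 0"]) (auto intro: GDERIV_const)

lemma C1_fun_add: "C1_fun f \<Longrightarrow> C1_fun g \<Longrightarrow> C1_fun (\<lambda>x. f x + g x)"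
  by (rule C1_funI[of "\<lambda>x. grad f x + grad g x"])
     (auto intro!: continuous_on_add GDERIV_add C1_fun_gderiv
       simp: continuous_on_eq_continuous_at C1_fun_isCont_grad)

lemma C1_fun_mult: "C1_fun f \<Longrightarrow> C1_fun g \<Longrightarrow> C1_fun (\<lambda>x. f x * g x)"
  by (rule C1_funI[of "\<lambda>x. f x *\<^sub>R grad g x + g x *\<^sub>R grad f x"])
     (auto intro!: continuous_intros GDERIV_mult C1_fun_gderiv
       simp: continuous_on_eq_continuous_at C1_fun_isCont_grad C1_fun_isCont)

lemma C1_fun_minus: "C1_fun f \<Longrightarrow> C1_fun (\<lambda>x. - f x)"
  using C1_fun_mult[OF C1_fun_const[of "-1"]] by simp

lemma C1_fun_diff: "C1_fun f \<Longrightarrow> C1_fun g \<Longrightarrow> C1_fun (\<lambda>x. f x - g x)"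
  using C1_fun_add[OF _ C1_fun_minus] by simp

lemma C1_fun_sum: "finite A \<Longrightarrow> (\<And>i. i \<in> A \<Longrightarrow> C1_fun (f i)) \<Longrightarrow> C1_fun (\<lambda>x. \<Sum>i\<in>A. f i x)"
  by (induction A rule: finite_induct) (auto intro: C1_fun_add C1_fun_const)

lemma C1_fun_vec_nth: "C1_fun (\<lambda>x::real^'n. x $ i)"
proof (rule C1_funI[of "\<lambda>x. axis i 1"])
  fix x :: "real^'n"
  have "((\<lambda>x. x $ i) has_derivative (\<lambda>h. h $ i)) (at x)"
    by (simp add: bounded_linear_imp_has_derivative bounded_linear_vec_nth)
  then show "GDERIV (\<lambda>x. x $ i) x :> axis i 1"
    by (simp add: gderiv_def inner_axis)
qed simp

lemma C1_fun_poly_fun: "p \<in> poly_fun \<Longrightarrow> C1_fun p"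
  by (induction rule: poly_fun.induct)
     (auto intro: C1_fun_const C1_fun_vec_nth C1_fun_add C1_fun_mult)

lemma gderiv_compose_fst:
  "GDERIV f (fst z) :> D \<Longrightarrow> GDERIV (\<lambda>z. f (fst z)) z :> (D, 0)"
  unfolding gderiv_def
  by (drule has_derivative_compose[OF has_derivative_fst[OF has_derivative_ident]])
     (simp add: inner_Pair_0)

lemma gderiv_compose_snd:
  "GDERIV f (snd z) :> D \<Longrightarrow> GDERIV (\<lambda>z. f (snd z)) z :> (0, D)"
  unfolding gderiv_def
  by (drule has_derivative_compose[OF has_derivative_snd[OF has_derivative_ident]])
     (simp add: inner_Pair_0)

lemma C1_fun_compose_fst: "C1_fun f \<Longrightarrow> C1_fun (\<lambda>z. f (fst z))"
  by (rule C1_funI[of "\<lambda>z. (grad f (fst z), 0)"])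
     (auto intro!: continuous_intros gderiv_compose_fst C1_fun_gderiv
       isCont_o2[OF isCont_fst C1_fun_isCont_grad] simp: continuous_on_eq_continuous_at)

lemma C1_fun_compose_snd: "C1_fun f \<Longrightarrow> C1_fun (\<lambda>z. f (snd z))"
  by (rule C1_funI[of "\<lambda>z. (0, grad f (snd z))"])
     (auto intro!: continuous_intros gderiv_compose_snd C1_fun_gderiv
       isCont_o2[OF isCont_snd C1_fun_isCont_grad] simp: continuous_on_eq_continuous_at)

lemma gderiv_Pair_left:
  assumes "GDERIV f (x, b) :> D" shows "GDERIV (\<lambda>x. f (x, b)) x :> fst D"
proof -
  have "((\<lambda>x. (x, b)) has_derivative (\<lambda>h. (h, 0))) (at x)"
    by (intro derivative_eq_intros) auto
  from has_derivative_compose[OF this assms[unfolded gderiv_def]]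
  show ?thesis unfolding gderiv_def by (simp add: inner_Pair_0 inner_commute)
qed

lemma gderiv_Pair_right:
  assumes "GDERIV f (a, y) :> D" shows "GDERIV (\<lambda>y. f (a, y)) y :> snd D"
proof -
  have "((\<lambda>y. (a, y)) has_derivative (\<lambda>h. (0, h))) (at y)"
    by (intro derivative_eq_intros) auto
  from has_derivative_compose[OF this assms[unfolded gderiv_def]]
  show ?thesis unfolding gderiv_def by (simp add: inner_Pair_0 inner_commute)
qed

lemma C1_fun_Pair_right:
  assumes "C1_fun f" shows "C1_fun (\<lambda>y. f (a, y))"
proof (rule C1_funI[of "\<lambda>y. snd (grad f (a, y))"])
  have "isCont (\<lambda>y. grad f (a, y)) y" for y
    by (rule isCont_o2[OF _ C1_fun_isCont_grad[OF assms]]) simp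
  then show "continuous_on UNIV (\<lambda>y. snd (grad f (a, y)))"
    by (simp add: continuous_on_eq_continuous_at isCont_snd)
qed (intro gderiv_Pair_right C1_fun_gderiv assms)

section \<open>Maximum functions\<close>

definition maximizers :: "('a \<Rightarrow> real) \<Rightarrow> 'a set \<Rightarrow> 'a set" where
  "maximizers f S = {y \<in> S. \<forall>z \<in> S. f z \<le> f y}"

lemma SUP_eq_maximizer: "y \<in> maximizers f S \<Longrightarrow> (SUP z \<in> S. f z) = f y"
  unfolding maximizers_def by (intro cSup_eq_maximum) auto

lemma le_SUP_if_maximizer: "y \<in> maximizers f S \<Longrightarrow> z \<in> S \<Longrightarrow> f z \<le> (SUP z \<in> S. f z)"
  using SUP_eq_maximizer[of y f S] unfolding maximizers_def by simp

lemma maximizers_closed_graph: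
  fixes \<phi> :: "'a::metric_space \<times> 'b::metric_space \<Rightarrow> real"
  assumes "continuous_on UNIV \<phi>" "closed S" "xs \<longlonglongrightarrow> x" "ys \<longlonglongrightarrow> y"
    and "\<And>k. ys k \<in> maximizers (\<lambda>y. \<phi> (xs k, y)) S"
  shows "y \<in> maximizers (\<lambda>y. \<phi> (x, y)) S"
proof -
  have lim: "(\<lambda>k. \<phi> (xs k, zs k)) \<longlonglongrightarrow> \<phi> (x, z)" if "zs \<longlonglongrightarrow> z" for zs z
  proof -
    have "isCont \<phi> (x, z)"
      using assms(1) by (simp add: continuous_on_eq_continuous_at)
    from isCont_tendsto_compose[OF this tendsto_Pair[OF assms(3) that]] show ?thesis .
  qed
  have "\<forall>k. ys k \<in> S"
    using assms(5) by (simp add: maximizers_def)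
  then have "y \<in> S"
    using closed_sequentially[OF assms(2) _ assms(4)] by blast
  moreover have "\<phi> (x, z) \<le> \<phi> (x, y)" if "z \<in> S" for z
    using assms(5) that unfolding maximizers_def
    by (intro LIMSEQ_le[OF lim[OF tendsto_const] lim[OF assms(4)]]) auto
  ultimately show ?thesis unfolding maximizers_def by blast
qed

lemma gderiv_SUP_eq_partial_grad:
  assumes "C1_fun \<phi>" "\<And>x. maximizers (\<lambda>y. \<phi> (x, y)) S \<noteq> {}"
    and "\<And>x. \<psi> x = (SUP y \<in> S. \<phi> (x, y))"
    and "y \<in> maximizers (\<lambda>y. \<phi> (x, y)) S" "GDERIV \<psi> x :> D"
  shows "D = fst (grad \<phi> (x, y))"
proof (rule gderiv_eq_if_touching_from_below)
  show "GDERIV (\<lambda>x. \<phi> (x, y)) x :> fst (grad \<phi> (x, y))"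
    using assms(1) by (intro gderiv_Pair_left C1_fun_gderiv)
  show "\<phi> (x', y) \<le> \<psi> x'" for x'
  proof -
    obtain y' where "y' \<in> maximizers (\<lambda>y. \<phi> (x', y)) S"
      using assms(2) by blast
    moreover have "y \<in> S"
      using assms(4) by (simp add: maximizers_def)
    ultimately show ?thesis
      using le_SUP_if_maximizer assms(3) by metis
  qed
  show "\<psi> x = \<phi> (x, y)"
    using assms(3,4) SUP_eq_maximizer by metis
qed fact

lemma limit_of_gradients_of_SUP:
  fixes \<phi> :: "('a::euclidean_space \<times> 'b::euclidean_space) \<Rightarrow> real"
  assumes "C1_fun \<phi>" "closed S"
    and "\<And>x. maximizers (\<lambda>y. \<phi> (x, y)) S \<noteq> {}"
    and "\<And>B. bounded B \<Longrightarrow> bounded (\<Union>x \<in> B. maximizers (\<lambda>y. \<phi> (x, y)) S)"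
    and "\<And>x. \<psi> x = (SUP y \<in> S. \<phi> (x, y))"
    and "xs \<longlonglongrightarrow> x" "\<And>k. GDERIV \<psi> (xs k) :> gs k" "gs \<longlonglongrightarrow> v"
  shows "\<exists>y \<in> maximizers (\<lambda>y. \<phi> (x, y)) S. v = fst (grad \<phi> (x, y))"
proof -
  have "\<forall>k. \<exists>y. y \<in> maximizers (\<lambda>y. \<phi> (xs k, y)) S"
    using assms(3) by blast
  then obtain ys where ys: "\<And>k. ys k \<in> maximizers (\<lambda>y. \<phi> (xs k, y)) S"
    by metis
  have "range ys \<subseteq> (\<Union>x \<in> range xs. maximizers (\<lambda>y. \<phi> (x, y)) S)"
    using ys by blast
  then have "bounded (range ys)"
    using assms(4)[OF convergent_imp_bounded[OF assms(6)]] bounded_subset by blast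
  then obtain y \<sigma> where \<sigma>: "strict_mono \<sigma>" "(ys \<circ> \<sigma>) \<longlonglongrightarrow> y"
    using bounded_imp_convergent_subsequence by blast
  have xs\<sigma>: "(xs \<circ> \<sigma>) \<longlonglongrightarrow> x"
    using LIMSEQ_subseq_LIMSEQ[OF assms(6) \<sigma>(1)] .
  have y: "y \<in> maximizers (\<lambda>y. \<phi> (x, y)) S"
    using maximizers_closed_graph[OF C1_fun_continuous_on[OF assms(1)] assms(2) xs\<sigma> \<sigma>(2)] ys
    by simp
  have "gs k = fst (grad \<phi> (xs k, ys k))" for k
    using assms(1,3,5) ys assms(7) by (rule gderiv_SUP_eq_partial_grad)
  moreover have "(\<lambda>k. grad \<phi> (xs (\<sigma> k), ys (\<sigma> k))) \<longlonglongrightarrow> grad \<phi> (x, y)"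
    using isCont_tendsto_compose[OF C1_fun_isCont_grad[OF assms(1)] tendsto_Pair[OF xs\<sigma> \<sigma>(2)]]
    by (simp add: o_def)
  ultimately have "(gs \<circ> \<sigma>) \<longlonglongrightarrow> fst (grad \<phi> (x, y))"
    by (simp add: o_def tendsto_fst)
  moreover have "(gs \<circ> \<sigma>) \<longlonglongrightarrow> v"
    using LIMSEQ_subseq_LIMSEQ[OF assms(8) \<sigma>(1)] .
  ultimately show ?thesis
    using y LIMSEQ_unique by blast
qed

section \<open>The regularized gap function\<close>

lemma quadratic_growth_bound:
  fixes t \<rho> a C :: real
  assumes "0 < \<rho>" "0 \<le> a" "0 \<le> C" "\<rho> / 2 * t\<^sup>2 \<le> a * t + C"
  shows "t \<le> 1 + 2 * (a + C) / \<rho>"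
proof (cases "t \<le> 1")
  case True
  moreover have "0 \<le> 2 * (a + C) / \<rho>"
    using assms by simp
  ultimately show ?thesis by linarith
next
  case False
  then have "C \<le> C * t"
    using assms(3) by (simp add: mult_le_cancel_left1)
  then have "\<rho> / 2 * t * t \<le> (a + C) * t"
    using assms(4) unfolding power2_eq_square distrib_right by (simp add: mult.assoc)
  then have "\<rho> / 2 * t \<le> a + C"
    using False by (simp add: mult_right_le_imp_le)
  then have "t \<le> 2 * (a + C) / \<rho>"
    using assms(1) by (simp add: pos_le_divide_eq mult.commute)
  then show ?thesis by simp
qed

text \<open>\<open>reg_gap F \<rho> x y\<close> is the paper's \<open>\<phi>(x, y)\<close>; its supremum over \<open>\<Omega>\<close> is Fukushima's
regularized gap function of the variational inequality defined by \<open>F\<close> and \<open>\<Omega>\<close>.\<close>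
definition reg_gap :: "('a::real_inner \<Rightarrow> 'a) \<Rightarrow> real \<Rightarrow> 'a \<Rightarrow> 'a \<Rightarrow> real" where
  "reg_gap F \<rho> x y = F x \<bullet> (x - y) - \<rho> / 2 * (norm (x - y))\<^sup>2"

lemma reg_gap_le: "reg_gap F \<rho> x y \<le> norm (F x) * norm (x - y) - \<rho> / 2 * (norm (x - y))\<^sup>2"
  unfolding reg_gap_def using norm_cauchy_schwarz[of "F x" "x - y"] by simp

lemma reg_gap_superlevel_bound:
  assumes "0 < \<rho>" "reg_gap F \<rho> x y0 \<le> reg_gap F \<rho> x y"
  shows "norm (x - y) \<le> 1 + 2 * (norm (F x) + \<bar>reg_gap F \<rho> x y0\<bar>) / \<rho>"
proof (rule quadratic_growth_bound[OF assms(1) norm_ge_zero abs_ge_zero])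
  show "\<rho> / 2 * (norm (x - y))\<^sup>2 \<le> norm (F x) * norm (x - y) + \<bar>reg_gap F \<rho> x y0\<bar>"
    using assms(2) reg_gap_le[of F \<rho> x y] by linarith
qed

lemma continuous_on_reg_gap_right: "continuous_on S (reg_gap F \<rho> x)"
  unfolding reg_gap_def by (intro continuous_intros)

lemma maximizers_reg_gap_nonempty:
  fixes F :: "'a::euclidean_space \<Rightarrow> 'a"
  assumes "0 < \<rho>" "closed S" "y0 \<in> S"
  shows "maximizers (reg_gap F \<rho> x) S \<noteq> {}"
proof -
  define R where "R = 1 + 2 * (norm (F x) + \<bar>reg_gap F \<rho> x y0\<bar>) / \<rho>"
  have far: "reg_gap F \<rho> x y < reg_gap F \<rho> x y0" if "R < norm (x - y)" for y
    using reg_gap_superlevel_bound[OF assms(1), of F x y0 y] that unfolding R_def by linarith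
  define K where "K = S \<inter> cball x R"
  have "\<not> R < norm (x - y0)"
    using far[of y0] by auto
  then have "y0 \<in> K"
    using assms(3) unfolding K_def by (simp add: dist_norm)
  moreover have "compact K"
    unfolding K_def using assms(2) by (intro closed_Int_compact) auto
  ultimately obtain y where y: "y \<in> K" "\<forall>z \<in> K. reg_gap F \<rho> x z \<le> reg_gap F \<rho> x y"
    using continuous_attains_sup[OF _ _ continuous_on_reg_gap_right] by blast
  have "reg_gap F \<rho> x z \<le> reg_gap F \<rho> x y" if "z \<in> S" for z
  proof (cases "z \<in> K")
    case False
    then have "reg_gap F \<rho> x z < reg_gap F \<rho> x y0"
      using that far unfolding K_def by (auto simp: dist_norm)
    then show ?thesis using y \<open>y0 \<in> K\<close> by fastforce
  qed (use y in blast)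
  then have "y \<in> maximizers (reg_gap F \<rho> x) S"
    using y(1) unfolding maximizers_def K_def by blast
  then show ?thesis by blast
qed

lemma maximizers_reg_gap_bounded:
  fixes F :: "'a::euclidean_space \<Rightarrow> 'a"
  assumes "0 < \<rho>" "y0 \<in> S" "continuous_on UNIV F" "bounded B"
  shows "bounded (\<Union>x \<in> B. maximizers (reg_gap F \<rho> x) S)"
proof -
  define m where "m x = norm (F x) + \<bar>reg_gap F \<rho> x y0\<bar>" for x
  have "continuous_on UNIV m"
    unfolding m_def reg_gap_def by (intro continuous_intros assms(3))
  then have "compact (m ` closure B)"
    using assms(4) by (metis compact_closure compact_continuous_image continuous_on_subset subset_UNIV)
  then obtain M where "\<forall>u \<in> m ` closure B. norm u \<le> M"
    by (meson compact_imp_bounded bounded_iff)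
  then have M: "m x \<le> M" if "x \<in> B" for x
    using closure_subset that by fastforce
  obtain b where b: "\<And>x. x \<in> B \<Longrightarrow> norm x \<le> b"
    using assms(4) unfolding bounded_iff by blast
  have "norm y \<le> b + (1 + 2 * M / \<rho>)" if "x \<in> B" "y \<in> maximizers (reg_gap F \<rho> x) S" for x y
  proof -
    have "reg_gap F \<rho> x y0 \<le> reg_gap F \<rho> x y"
      using that(2) assms(2) unfolding maximizers_def by blast
    then have "norm (x - y) \<le> 1 + 2 * m x / \<rho>"
      unfolding m_def by (rule reg_gap_superlevel_bound[OF assms(1)])
    also have "\<dots> \<le> 1 + 2 * M / \<rho>"
      using M[OF that(1)] assms(1) by (simp add: divide_right_mono)
    finally show ?thesis
      using b[OF that(1)] norm_triangle_ineq4[of x "x - y"] by simp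
  qed
  then show ?thesis
    unfolding bounded_iff by blast
qed

lemma C1_fun_reg_gap:
  fixes F :: "real^'n \<Rightarrow> real^'n"
  assumes "\<And>i. C1_fun (\<lambda>x. F x $ i)"
  shows "C1_fun (\<lambda>z. reg_gap F \<rho> (fst z) (snd z))"
proof -
  have "reg_gap F \<rho> (fst z) (snd z) =
      (\<Sum>i\<in>UNIV. F (fst z) $ i * (fst z $ i - snd z $ i))
      - \<rho> / 2 * (\<Sum>i\<in>UNIV. (fst z $ i - snd z $ i) * (fst z $ i - snd z $ i))" for z
    by (simp add: reg_gap_def inner_vec_def power2_norm_eq_inner)
  moreover have "C1_fun (\<lambda>z. (\<Sum>i\<in>UNIV. F (fst z) $ i * (fst z $ i - snd z $ i))
      - \<rho> / 2 * (\<Sum>i\<in>UNIV. (fst z $ i - snd z $ i) * (fst z $ i - snd z $ i)))"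
    by (intro C1_fun_diff C1_fun_sum C1_fun_mult C1_fun_const C1_fun_compose_fst
        C1_fun_compose_snd assms C1_fun_vec_nth) auto
  ultimately show ?thesis by simp
qed

section \<open>KKT conditions under MFCQ\<close>

lemma closed_feas:
  assumes "\<forall>i<r. continuous_on UNIV (g i)" "\<forall>j<s. continuous_on UNIV (h j)"
  shows "closed (feas g r h s)"
proof -
  have "feas g r h s = (\<Inter>i<r. {y. g i y \<le> 0}) \<inter> (\<Inter>j<s. {y. h j y = 0})"
    unfolding feas_def by auto
  then show ?thesis
    using assms by (auto intro!: closed_INT closed_Collect_le closed_Collect_eq)
qed

definition MFCQ_at :: "(nat \<Rightarrow> 'a::real_inner \<Rightarrow> real) \<Rightarrow> nat \<Rightarrow> (nat \<Rightarrow> 'a \<Rightarrow> real) \<Rightarrow> nat \<Rightarrow> 'a \<Rightarrow> bool" where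
  "MFCQ_at g r h s y \<longleftrightarrow>
     (\<forall>c. (\<Sum>j<s. c j *\<^sub>R grad (h j) y) = 0 \<longrightarrow> (\<forall>j<s. c j = 0)) \<and>
     (\<exists>v. (\<forall>i<r. g i y = 0 \<longrightarrow> grad (g i) y \<bullet> v < 0) \<and> (\<forall>j<s. grad (h j) y \<bullet> v = 0))"

lemma MFCQ_imp_MFCQ_at: "MFCQ g r h s \<Longrightarrow> y \<in> feas g r h s \<Longrightarrow> MFCQ_at g r h s y"
  unfolding MFCQ_def MFCQ_at_def by blast

lemma MFCQ_at_multipliers_eq_0:
  assumes "MFCQ_at g r h s y" "\<forall>i<r. 0 \<le> \<mu> i \<and> \<mu> i * g i y = 0"
    and "(\<Sum>i<r. \<mu> i *\<^sub>R grad (g i) y) + (\<Sum>j<s. \<kappa> j *\<^sub>R grad (h j) y) = 0"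
  shows "(\<forall>i<r. \<mu> i = 0) \<and> (\<forall>j<s. \<kappa> j = 0)"
proof -
  obtain v where v: "\<And>i. i < r \<Longrightarrow> g i y = 0 \<Longrightarrow> grad (g i) y \<bullet> v < 0"
    "\<And>j. j < s \<Longrightarrow> grad (h j) y \<bullet> v = 0"
    using assms(1) unfolding MFCQ_at_def by blast
  have nonpos: "\<mu> i * (grad (g i) y \<bullet> v) \<le> 0" if "i < r" for i
    using assms(2) v(1)[OF that] that by (cases "g i y = 0") (auto simp: mult_nonneg_nonpos)
  have "((\<Sum>i<r. \<mu> i *\<^sub>R grad (g i) y) + (\<Sum>j<s. \<kappa> j *\<^sub>R grad (h j) y)) \<bullet> v
      = (\<Sum>i<r. \<mu> i * (grad (g i) y \<bullet> v))"
    using v(2) by (simp add: inner_add_left inner_sum_left)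
  then have "(\<Sum>i<r. - (\<mu> i * (grad (g i) y \<bullet> v))) = 0"
    using assms(3) by (simp add: sum_negf)
  then have "\<mu> i * (grad (g i) y \<bullet> v) = 0" if "i < r" for i
    using sum_nonneg_eq_0_iff[of "{..<r}" "\<lambda>i. - (\<mu> i * (grad (g i) y \<bullet> v))"] nonpos that
    by (simp add: less_eq_neg_nonpos)
  then have \<mu>: "\<forall>i<r. \<mu> i = 0"
    using assms(2) v(1) by (metis less_irrefl mult_eq_0_iff)
  then have "(\<Sum>j<s. \<kappa> j *\<^sub>R grad (h j) y) = 0"
    using assms(3) by simp
  then show ?thesis
    using \<mu> assms(1) unfolding MFCQ_at_def by blast
qed

definition penalty :: "(nat \<Rightarrow> 'a \<Rightarrow> real) \<Rightarrow> nat \<Rightarrow> (nat \<Rightarrow> 'a \<Rightarrow> real) \<Rightarrow> nat \<Rightarrow> 'a \<Rightarrow> real" where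
  "penalty g r h s y = (\<Sum>i<r. (max 0 (g i y))\<^sup>2) + (\<Sum>j<s. (h j y)\<^sup>2)"

lemma penalty_nonneg: "0 \<le> penalty g r h s y"
  unfolding penalty_def by (simp add: sum_nonneg)

lemma penalty_eq_0_iff: "penalty g r h s y = 0 \<longleftrightarrow> y \<in> feas g r h s"
  unfolding penalty_def feas_def
  by (auto simp: add_nonneg_eq_0_iff sum_nonneg sum_nonneg_eq_0_iff max_def)
     (metis lessThan_iff linorder_le_cases order_refl)

lemma DERIV_max_0_power2: "DERIV (\<lambda>t::real. (max 0 t)\<^sup>2) t :> 2 * max 0 t"
proof (cases "t = 0")
  case True
  have "((\<lambda>u::real. max 0 u) \<longlongrightarrow> max 0 0) (at 0)"
    by (intro tendsto_max tendsto_const tendsto_ident_at)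
  moreover have "((max 0 u)\<^sup>2 - (max 0 0)\<^sup>2) / u = max 0 u" for u :: real
    by (cases "u \<le> 0") (auto simp: power2_eq_square)
  ultimately show ?thesis
    using True by (simp add: DERIV_def)
next
  case False
  define U where "U = (if 0 < t then {0<..} else {..<0::real})"
  have U: "open U" "t \<in> U"
    using False by (auto simp: U_def)
  have "DERIV (\<lambda>u::real. if 0 < t then u\<^sup>2 else 0) t :> 2 * max 0 t"
    using False by (cases "0 < t") (auto intro!: derivative_eq_intros)
  then show ?thesis
    by (rule has_field_derivative_transform_within_open[OF _ U]) (auto simp: U_def split: if_splits)
qed

lemma gderiv_penalty:
  assumes "\<forall>i<r. C1_fun (g i)" "\<forall>j<s. C1_fun (h j)"
  shows "GDERIV (penalty g r h s) y :>
    (\<Sum>i<r. (2 * max 0 (g i y)) *\<^sub>R grad (g i) y) + (\<Sum>j<s. (2 * h j y) *\<^sub>R grad (h j) y)"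
proof -
  have "penalty g r h s = (\<lambda>y. (\<Sum>i<r. (max 0 (g i y))\<^sup>2) + (\<Sum>j<s. (h j y)\<^sup>2))"
    by (simp add: fun_eq_iff penalty_def)
  moreover have "GDERIV (\<lambda>y. (max 0 (g i y))\<^sup>2) y :> (2 * max 0 (g i y)) *\<^sub>R grad (g i) y"
    if "i < r" for i
    using assms(1) that by (intro GDERIV_DERIV_compose C1_fun_gderiv DERIV_max_0_power2) auto
  moreover have "GDERIV (\<lambda>y. (h j y)\<^sup>2) y :> (2 * h j y) *\<^sub>R grad (h j) y" if "j < s" for j
    using assms(2) that
    by (intro GDERIV_DERIV_compose C1_fun_gderiv) (auto intro!: derivative_eq_intros)
  ultimately show ?thesis
    by (simp only:) (intro GDERIV_add GDERIV_sum; simp)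
qed

lemma isCont_penalty:
  assumes "\<forall>i<r. C1_fun (g i)" "\<forall>j<s. C1_fun (h j)"
  shows "isCont (penalty g r h s) y"
  using gderiv_penalty[OF assms] unfolding gderiv_def by (rule has_derivative_continuous)

lemma tendsto_0_if_of_nat_mult_bounded:
  fixes p :: "nat \<Rightarrow> real"
  assumes "\<And>k. real k * p k \<le> C" "\<And>k. 0 \<le> p k"
  shows "p \<longlonglongrightarrow> 0"
proof (rule tendsto_sandwich[of "\<lambda>k. 0" _ _ "\<lambda>k. C / real k"])
  show "\<forall>\<^sub>F k in sequentially. p k \<le> C / real k"
    using assms(1) by (intro eventually_sequentiallyI[of 1]) (simp add: pos_le_divide_eq mult.commute)
qed (auto simp: assms(2) intro: lim_const_over_n)

lemma penalized_minimizers_subseq_tendsto: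
  fixes f :: "'a::euclidean_space \<Rightarrow> real"
  assumes "C1_fun f" "\<forall>i<r. C1_fun (g i)" "\<forall>j<s. C1_fun (h j)"
    and "y0 \<in> feas g r h s" "\<forall>y \<in> feas g r h s \<inter> cball y0 \<delta>. f y0 \<le> f y"
    and "\<And>k. ys k \<in> cball y0 \<delta>"
    and "\<And>k y. y \<in> cball y0 \<delta> \<Longrightarrow>
      f (ys k) + real k * penalty g r h s (ys k) / 2 + (norm (ys k - y0))\<^sup>2 / 2
      \<le> f y + real k * penalty g r h s y / 2 + (norm (y - y0))\<^sup>2 / 2"
  shows "\<exists>\<sigma>. strict_mono \<sigma> \<and> (ys \<circ> \<sigma>) \<longlonglongrightarrow> y0"
proof -
  let ?pen = "penalty g r h s"
  have K: "compact (cball y0 \<delta>)" "y0 \<in> cball y0 \<delta>"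
    using assms(6)[of 0] by (auto intro: order_trans[OF zero_le_dist])
  obtain m where m: "\<And>y. y \<in> cball y0 \<delta> \<Longrightarrow> m \<le> f y"
    using continuous_attains_inf[OF K(1) _ C1_fun_continuous_on[OF assms(1)]] K(2) by blast
  have main: "f (ys k) + real k * ?pen (ys k) / 2 + (norm (ys k - y0))\<^sup>2 / 2 \<le> f y0" for k
    using assms(7)[OF K(2), of k] assms(4) penalty_eq_0_iff[of g r h s y0] by simp
  have pen_le: "real k * ?pen (ys k) \<le> 2 * (f y0 - m)" for k
    using main[of k] m[OF assms(6)[of k]] zero_le_power2[of "norm (ys k - y0)"] by argo
  obtain y \<sigma> where \<sigma>: "y \<in> cball y0 \<delta>" "strict_mono \<sigma>" "(ys \<circ> \<sigma>) \<longlonglongrightarrow> y"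
    using compact_imp_seq_compact[OF K(1)] assms(6) unfolding seq_compact_def by metis
  have "(\<lambda>k. ?pen (ys (\<sigma> k))) \<longlonglongrightarrow> ?pen y"
    using isCont_tendsto_compose[OF isCont_penalty[OF assms(2,3)] \<sigma>(3)] by (simp add: o_def)
  moreover have "(\<lambda>k. ?pen (ys k)) \<longlonglongrightarrow> 0"
    using pen_le penalty_nonneg by (rule tendsto_0_if_of_nat_mult_bounded)
  then have "(\<lambda>k. ?pen (ys (\<sigma> k))) \<longlonglongrightarrow> 0"
    using LIMSEQ_subseq_LIMSEQ[OF _ \<sigma>(2)] by (simp add: o_def)
  ultimately have "y \<in> feas g r h s"
    using LIMSEQ_unique penalty_eq_0_iff by metis
  then have "f y0 \<le> f y"
    using assms(5) \<sigma>(1) by blast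
  moreover have "f y + (norm (y - y0))\<^sup>2 / 2 \<le> f y0"
  proof (rule LIMSEQ_le_const2)
    have "(\<lambda>k. ys (\<sigma> k)) \<longlonglongrightarrow> y"
      using \<sigma>(3) by (simp add: o_def)
    then show "(\<lambda>k. f (ys (\<sigma> k)) + (norm (ys (\<sigma> k) - y0))\<^sup>2 / 2) \<longlonglongrightarrow> f y + (norm (y - y0))\<^sup>2 / 2"
      by (intro tendsto_intros isCont_tendsto_compose[OF C1_fun_isCont[OF assms(1)]]) simp_all
    have "f (ys k) + (norm (ys k - y0))\<^sup>2 / 2 \<le> f y0" for k
      using main[of k] mult_nonneg_nonneg[OF of_nat_0_le_iff penalty_nonneg, of k g r h s "ys k"]
      by argo
    then show "\<exists>N. \<forall>k\<ge>N. f (ys (\<sigma> k)) + (norm (ys (\<sigma> k) - y0))\<^sup>2 / 2 \<le> f y0"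
      by blast
  qed
  ultimately have "(norm (y - y0))\<^sup>2 \<le> 0"
    by linarith
  then have "y = y0"
    by simp
  then show ?thesis
    using \<sigma> by blast
qed

lemma gderiv_half_norm_diff_power2:
  fixes y0 :: "'a::real_inner"
  shows "GDERIV (\<lambda>y. (norm (y - y0))\<^sup>2 / 2) y :> y - y0"
proof -
  have "((\<lambda>y. (y - y0) \<bullet> (y - y0) / 2) has_derivative (\<lambda>h. ((y - y0) \<bullet> h + h \<bullet> (y - y0)) / 2)) (at y)"
    by (auto intro!: derivative_eq_intros)
  moreover have "(\<lambda>h. ((y - y0) \<bullet> h + h \<bullet> (y - y0)) / 2) = (\<lambda>h. h \<bullet> (y - y0))"
    by (auto simp: inner_commute)
  ultimately show ?thesis
    unfolding gderiv_def by (simp add: power2_norm_eq_inner)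
qed

lemma penalized_local_min_stationary:
  assumes "C1_fun f" "\<forall>i<r. C1_fun (g i)" "\<forall>j<s. C1_fun (h j)" "y \<in> ball y0 \<delta>"
    and "\<forall>z \<in> cball y0 \<delta>. f y + c * penalty g r h s y / 2 + (norm (y - y0))\<^sup>2 / 2
                          \<le> f z + c * penalty g r h s z / 2 + (norm (z - y0))\<^sup>2 / 2"
  shows "grad f y + (\<Sum>i<r. (c * max 0 (g i y)) *\<^sub>R grad (g i) y)
           + (\<Sum>j<s. (c * h j y) *\<^sub>R grad (h j) y) = y0 - y"
proof -
  define Dpen where "Dpen =
    (\<Sum>i<r. (2 * max 0 (g i y)) *\<^sub>R grad (g i) y) + (\<Sum>j<s. (2 * h j y) *\<^sub>R grad (h j) y)"
  have "GDERIV (\<lambda>z. c * penalty g r h s z / 2) y :> (c / 2) *\<^sub>R Dpen"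
    unfolding Dpen_def
    by (rule GDERIV_DERIV_compose[OF gderiv_penalty[OF assms(2,3)]]) (auto intro!: derivative_eq_intros)
  then have "GDERIV (\<lambda>z. f z + c * penalty g r h s z / 2 + (norm (z - y0))\<^sup>2 / 2) y
      :> grad f y + (c / 2) *\<^sub>R Dpen + (y - y0)"
    by (intro GDERIV_add C1_fun_gderiv assms(1) gderiv_half_norm_diff_power2)
  moreover have "\<forall>\<^sub>F z in at y. f y + c * penalty g r h s y / 2 + (norm (y - y0))\<^sup>2 / 2
      \<le> f z + c * penalty g r h s z / 2 + (norm (z - y0))\<^sup>2 / 2"
    using eventually_at_in_open'[OF open_ball assms(4)] assms(5) by (auto elim!: eventually_mono)
  ultimately have "grad f y + (c / 2) *\<^sub>R Dpen + (y - y0) = 0"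
    by (rule gderiv_local_min_eq_0)
  then show ?thesis
    unfolding Dpen_def by (simp add: scaleR_add_right scaleR_sum_right algebra_simps)
qed

text \<open>The approximate KKT condition (AKKT) of Andreani, Haeser and Martinez.\<close>
definition AKKT_point :: "('a::real_inner \<Rightarrow> real) \<Rightarrow> (nat \<Rightarrow> 'a \<Rightarrow> real) \<Rightarrow> nat \<Rightarrow>
    (nat \<Rightarrow> 'a \<Rightarrow> real) \<Rightarrow> nat \<Rightarrow> 'a \<Rightarrow> bool" where
  "AKKT_point f g r h s y \<longleftrightarrow> (\<exists>ys \<mu> \<kappa>. ys \<longlonglongrightarrow> y \<and>
     (\<forall>k i. 0 \<le> \<mu> k i \<and> (g i (ys k) < 0 \<longrightarrow> \<mu> k i = 0)) \<and>
     (\<lambda>k. grad f (ys k) + (\<Sum>i<r. \<mu> k i *\<^sub>R grad (g i) (ys k))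
        + (\<Sum>j<s. \<kappa> k j *\<^sub>R grad (h j) (ys k))) \<longlonglongrightarrow> 0)"

lemma local_min_imp_AKKT_point:
  fixes f :: "'a::euclidean_space \<Rightarrow> real"
  assumes "C1_fun f" "\<forall>i<r. C1_fun (g i)" "\<forall>j<s. C1_fun (h j)"
    and "y0 \<in> feas g r h s" "0 < \<delta>" "\<forall>y \<in> feas g r h s \<inter> cball y0 \<delta>. f y0 \<le> f y"
  shows "AKKT_point f g r h s y0"
proof -
  define P where "P k y = f y + real k * penalty g r h s y / 2 + (norm (y - y0))\<^sup>2 / 2" for k y
  have "continuous_on S (penalty g r h s)" for S
    using isCont_penalty[OF assms(2,3)] by (simp add: continuous_at_imp_continuous_on)
  then have "continuous_on (cball y0 \<delta>) (P k)" for k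
    unfolding P_def using C1_fun_continuous_on[OF assms(1)] by (intro continuous_intros) auto
  then have "\<exists>y \<in> cball y0 \<delta>. \<forall>z \<in> cball y0 \<delta>. P k y \<le> P k z" for k
    using assms(5) by (intro continuous_attains_inf) auto
  then obtain ys where ys: "\<And>k. ys k \<in> cball y0 \<delta>" "\<And>k z. z \<in> cball y0 \<delta> \<Longrightarrow> P k (ys k) \<le> P k z"
    by metis
  have "\<exists>\<sigma>. strict_mono \<sigma> \<and> (ys \<circ> \<sigma>) \<longlonglongrightarrow> y0"
    by (rule penalized_minimizers_subseq_tendsto[OF assms(1-4,6)]) (use ys in \<open>auto simp: P_def\<close>)
  then obtain \<sigma> where \<sigma>: "strict_mono \<sigma>" "(ys \<circ> \<sigma>) \<longlonglongrightarrow> y0"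
    by blast
  define zs where "zs = ys \<circ> \<sigma>"
  define \<mu> where "\<mu> k i = real (\<sigma> k) * max 0 (g i (zs k))" for k i
  define \<kappa> where "\<kappa> k j = real (\<sigma> k) * h j (zs k)" for k j
  have "\<forall>\<^sub>F k in sequentially. zs k \<in> ball y0 \<delta>"
    using topological_tendstoD[OF \<sigma>(2) open_ball, of y0 \<delta>] assms(5) unfolding zs_def by simp
  then have "\<forall>\<^sub>F k in sequentially. y0 - zs k = grad f (zs k)
      + (\<Sum>i<r. \<mu> k i *\<^sub>R grad (g i) (zs k)) + (\<Sum>j<s. \<kappa> k j *\<^sub>R grad (h j) (zs k))"
    using penalized_local_min_stationary[OF assms(1-3)] ys(2)
    unfolding \<mu>_def \<kappa>_def zs_def P_def by (auto elim!: eventually_mono)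
  moreover have "(\<lambda>k. y0 - zs k) \<longlonglongrightarrow> 0"
    using tendsto_diff[OF tendsto_const[of y0] \<sigma>(2)] unfolding zs_def by (simp add: o_def)
  ultimately have "(\<lambda>k. grad f (zs k) + (\<Sum>i<r. \<mu> k i *\<^sub>R grad (g i) (zs k))
      + (\<Sum>j<s. \<kappa> k j *\<^sub>R grad (h j) (zs k))) \<longlonglongrightarrow> 0"
    by (rule Lim_transform_eventually[rotated])
  moreover have "\<forall>k i. 0 \<le> \<mu> k i \<and> (g i (zs k) < 0 \<longrightarrow> \<mu> k i = 0)"
    unfolding \<mu>_def by simp
  ultimately show ?thesis
    unfolding AKKT_point_def using \<sigma>(2) zs_def by blast
qed

lemma bounded_family_convergent_subseq:
  fixes u :: "nat \<Rightarrow> nat \<Rightarrow> real"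
  assumes "\<And>k i. i < m \<Longrightarrow> \<bar>u k i\<bar> \<le> C"
  shows "\<exists>\<sigma> L. strict_mono \<sigma> \<and> (\<forall>i<m. (\<lambda>k. u (\<sigma> k) i) \<longlonglongrightarrow> L i)"
  using assms
proof (induction m)
  case 0
  show ?case
    using strict_mono_id by blast
next
  case (Suc m)
  have "\<exists>\<sigma> L. strict_mono \<sigma> \<and> (\<forall>i<m. (\<lambda>k. u (\<sigma> k) i) \<longlonglongrightarrow> L i)"
    by (rule Suc.IH) (simp add: Suc.prems)
  then obtain \<sigma> L where \<sigma>: "strict_mono \<sigma>" "\<forall>i<m. (\<lambda>k. u (\<sigma> k) i) \<longlonglongrightarrow> L i"
    by blast
  have "bounded (range (\<lambda>k. u (\<sigma> k) m))"
    using Suc.prems unfolding bounded_iff by (intro exI[of _ C]) auto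
  then obtain l \<tau> where \<tau>: "strict_mono \<tau>" "((\<lambda>k. u (\<sigma> k) m) \<circ> \<tau>) \<longlonglongrightarrow> l"
    using bounded_imp_convergent_subsequence by blast
  have "(\<lambda>k. u ((\<sigma> \<circ> \<tau>) k) i) \<longlonglongrightarrow> (L(m := l)) i" if "i < Suc m" for i
  proof (cases "i = m")
    case True
    then show ?thesis using \<tau>(2) by (simp add: o_def)
  next
    case False
    then show ?thesis
      using LIMSEQ_subseq_LIMSEQ[OF \<sigma>(2)[rule_format] \<tau>(1), of i] that by (simp add: o_def)
  qed
  then show ?case
    using strict_mono_o[OF \<sigma>(1) \<tau>(1)] by blast
qed

lemma AKKT_point_normalized:
  assumes "AKKT_point f g r h s y"
  shows "\<exists>ys l \<mu> \<kappa>. ys \<longlonglongrightarrow> y \<and> (\<forall>k. 0 \<le> l k) \<and> (\<forall>k i. 0 \<le> \<mu> k i \<and> (g i (ys k) < 0 \<longrightarrow> \<mu> k i = 0))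
    \<and> (\<forall>k. l k + (\<Sum>i<r. \<mu> k i) + (\<Sum>j<s. \<bar>\<kappa> k j\<bar>) = 1)
    \<and> (\<lambda>k. l k *\<^sub>R grad f (ys k) + (\<Sum>i<r. \<mu> k i *\<^sub>R grad (g i) (ys k))
         + (\<Sum>j<s. \<kappa> k j *\<^sub>R grad (h j) (ys k))) \<longlonglongrightarrow> 0"
proof -
  obtain ys a b where ys: "ys \<longlonglongrightarrow> y"
    and a: "\<And>k i. 0 \<le> a k i" "\<And>k i. g i (ys k) < 0 \<Longrightarrow> a k i = 0"
    and G: "(\<lambda>k. grad f (ys k) + (\<Sum>i<r. a k i *\<^sub>R grad (g i) (ys k))
              + (\<Sum>j<s. b k j *\<^sub>R grad (h j) (ys k))) \<longlonglongrightarrow> 0" (is "?G \<longlonglongrightarrow> 0")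
    using assms unfolding AKKT_point_def by blast
  define L where "L k = 1 + (\<Sum>i<r. a k i) + (\<Sum>j<s. \<bar>b k j\<bar>)" for k
  have L: "1 \<le> L k" for k
    unfolding L_def using a(1) by (simp add: sum_nonneg)
  have "norm ((1 / L k) *\<^sub>R ?G k) \<le> norm (?G k) / 1" for k
    using divide_left_mono[OF L[of k] norm_ge_zero] L[of k] by simp
  then have "\<forall>\<^sub>F k in sequentially. norm ((1 / L k) *\<^sub>R ?G k) \<le> norm (?G k)"
    by simp
  then have "(\<lambda>k. (1 / L k) *\<^sub>R ?G k) \<longlonglongrightarrow> 0"
    by (rule Lim_null_comparison[OF _ tendsto_norm_zero[OF G]])
  then have "(\<lambda>k. (1 / L k) *\<^sub>R grad f (ys k) + (\<Sum>i<r. (a k i / L k) *\<^sub>R grad (g i) (ys k))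
      + (\<Sum>j<s. (b k j / L k) *\<^sub>R grad (h j) (ys k))) \<longlonglongrightarrow> 0"
    by (simp add: scaleR_add_right scaleR_sum_right)
  moreover have "1 / L k + (\<Sum>i<r. a k i / L k) + (\<Sum>j<s. \<bar>b k j / L k\<bar>) = 1" for k
    using L[of k] by (simp add: L_def sum_divide_distrib[symmetric] add_divide_distrib[symmetric])
  moreover have "0 \<le> 1 / L k" "0 \<le> a k i / L k" "g i (ys k) < 0 \<Longrightarrow> a k i / L k = 0" for k i
    using L[of k] a(1)[of k i] a(2) by simp_all
  ultimately show ?thesis
    using ys by (intro exI[of _ ys] exI[of _ "\<lambda>k. 1 / L k"] exI[of _ "\<lambda>k i. a k i / L k"]
        exI[of _ "\<lambda>k j. b k j / L k"]) auto
qed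

lemma AKKT_point_imp_Fritz_John:
  assumes "AKKT_point f g r h s y" "C1_fun f" "\<forall>i<r. C1_fun (g i)" "\<forall>j<s. C1_fun (h j)"
  shows "\<exists>\<mu>0 \<mu> \<kappa>. 0 \<le> \<mu>0 \<and> (\<forall>i<r. 0 \<le> \<mu> i \<and> (g i y < 0 \<longrightarrow> \<mu> i = 0))
    \<and> \<mu>0 + (\<Sum>i<r. \<mu> i) + (\<Sum>j<s. \<bar>\<kappa> j\<bar>) = 1
    \<and> \<mu>0 *\<^sub>R grad f y + (\<Sum>i<r. \<mu> i *\<^sub>R grad (g i) y) + (\<Sum>j<s. \<kappa> j *\<^sub>R grad (h j) y) = 0"
proof -
  obtain ys l a b where ys: "ys \<longlonglongrightarrow> y" and l: "\<And>k. 0 \<le> l k"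
    and a: "\<And>k i. 0 \<le> a k i" "\<And>k i. g i (ys k) < 0 \<Longrightarrow> a k i = 0"
    and sum1: "\<And>k. l k + (\<Sum>i<r. a k i) + (\<Sum>j<s. \<bar>b k j\<bar>) = 1"
    and G: "(\<lambda>k. l k *\<^sub>R grad f (ys k) + (\<Sum>i<r. a k i *\<^sub>R grad (g i) (ys k))
              + (\<Sum>j<s. b k j *\<^sub>R grad (h j) (ys k))) \<longlonglongrightarrow> 0"
    using AKKT_point_normalized[OF assms(1)] by blast
  text \<open>The three multiplier sequences are packed into one family indexed by \<open>{..<r + s + 1}\<close>,
    so that a single subsequence makes all of them converge.\<close>
  define u where "u k i = (if i < r then a k i else if i < r + s then b k (i - r) else l k)" for k i
  have "\<bar>u k i\<bar> \<le> 1" for k i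
  proof -
    have sums: "0 \<le> (\<Sum>i<r. a k i)" "0 \<le> (\<Sum>j<s. \<bar>b k j\<bar>)"
      using a(1) by (simp_all add: sum_nonneg)
    have "a k i \<le> (\<Sum>i<r. a k i)" if "i < r"
      using that a(1) by (intro member_le_sum) auto
    then have "a k i \<le> 1" if "i < r"
      using that sum1[of k] sums l[of k] by linarith
    moreover have "\<bar>b k (i - r)\<bar> \<le> (\<Sum>j<s. \<bar>b k j\<bar>)" if "\<not> i < r" "i < r + s"
      using that by (intro member_le_sum) auto
    then have "\<bar>b k (i - r)\<bar> \<le> 1" if "\<not> i < r" "i < r + s"
      using that sum1[of k] sums l[of k] by linarith
    moreover have "l k \<le> 1"
      using sum1[of k] sums by linarith
    ultimately show ?thesis
      using l[of k] a(1)[of k i] unfolding u_def by auto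
  qed
  then obtain \<tau> lim where \<tau>: "strict_mono \<tau>" "\<forall>i<r + s + 1. (\<lambda>k. u (\<tau> k) i) \<longlonglongrightarrow> lim i"
    using bounded_family_convergent_subseq by blast
  define \<mu>0 \<mu> \<kappa> where "\<mu>0 = lim (r + s)" and "\<mu> i = lim i" and "\<kappa> j = lim (r + j)" for i j
  have lim_\<mu>0: "(\<lambda>k. l (\<tau> k)) \<longlonglongrightarrow> \<mu>0"
    using \<tau>(2) unfolding \<mu>0_def u_def by auto
  have lim_\<mu>: "(\<lambda>k. a (\<tau> k) i) \<longlonglongrightarrow> \<mu> i" if "i < r" for i
    using \<tau>(2)[rule_format, of i] that unfolding \<mu>_def u_def by simp
  have lim_\<kappa>: "(\<lambda>k. b (\<tau> k) j) \<longlonglongrightarrow> \<kappa> j" if "j < s" for j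
    using \<tau>(2)[rule_format, of "r + j"] that unfolding \<kappa>_def u_def by auto
  have ys\<tau>: "(\<lambda>k. ys (\<tau> k)) \<longlonglongrightarrow> y"
    using LIMSEQ_subseq_LIMSEQ[OF ys \<tau>(1)] by (simp add: o_def)
  have "0 \<le> \<mu>0"
    using l by (intro LIMSEQ_le_const[OF lim_\<mu>0]) auto
  moreover have "0 \<le> \<mu> i" if "i < r" for i
    using a(1) by (intro LIMSEQ_le_const[OF lim_\<mu>[OF that]]) auto
  moreover have "\<mu> i = 0" if "i < r" "g i y < 0" for i
  proof -
    have "\<forall>\<^sub>F k in sequentially. g i (ys (\<tau> k)) < 0"
      using order_tendstoD(2)[OF isCont_tendsto_compose[OF C1_fun_isCont[of "g i"] ys\<tau>] that(2)]
        assms(3) that(1) by blast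
    then have "\<forall>\<^sub>F k in sequentially. a (\<tau> k) i = 0"
      by (auto elim!: eventually_mono simp: a(2))
    then show ?thesis
      using lim_\<mu>[OF that(1)] tendsto_eventually LIMSEQ_unique by metis
  qed
  moreover have "(\<lambda>k. l (\<tau> k) + (\<Sum>i<r. a (\<tau> k) i) + (\<Sum>j<s. \<bar>b (\<tau> k) j\<bar>))
      \<longlonglongrightarrow> \<mu>0 + (\<Sum>i<r. \<mu> i) + (\<Sum>j<s. \<bar>\<kappa> j\<bar>)"
    by (intro tendsto_add lim_\<mu>0 tendsto_sum tendsto_rabs lim_\<mu> lim_\<kappa>) auto
  then have "\<mu>0 + (\<Sum>i<r. \<mu> i) + (\<Sum>j<s. \<bar>\<kappa> j\<bar>) = 1"
    by (simp add: sum1 LIMSEQ_const_iff)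
  moreover have "(\<lambda>k. l (\<tau> k) *\<^sub>R grad f (ys (\<tau> k)) + (\<Sum>i<r. a (\<tau> k) i *\<^sub>R grad (g i) (ys (\<tau> k)))
      + (\<Sum>j<s. b (\<tau> k) j *\<^sub>R grad (h j) (ys (\<tau> k))))
      \<longlonglongrightarrow> \<mu>0 *\<^sub>R grad f y + (\<Sum>i<r. \<mu> i *\<^sub>R grad (g i) y) + (\<Sum>j<s. \<kappa> j *\<^sub>R grad (h j) y)"
    using assms(2-4)
    by (intro tendsto_add tendsto_scaleR tendsto_sum lim_\<mu>0 isCont_tendsto_compose[OF C1_fun_isCont_grad ys\<tau>])
      (auto simp: lim_\<mu> lim_\<kappa>)
  then have "\<mu>0 *\<^sub>R grad f y + (\<Sum>i<r. \<mu> i *\<^sub>R grad (g i) y) + (\<Sum>j<s. \<kappa> j *\<^sub>R grad (h j) y) = 0"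
    using LIMSEQ_unique LIMSEQ_subseq_LIMSEQ[OF G \<tau>(1)] by (auto simp: o_def)
  ultimately show ?thesis
    by blast
qed

lemma AKKT_point_MFCQ_at_imp_KKT:
  assumes "AKKT_point f g r h s y" "C1_fun f" "\<forall>i<r. C1_fun (g i)" "\<forall>j<s. C1_fun (h j)"
    and "y \<in> feas g r h s" "MFCQ_at g r h s y"
  shows "- grad f y \<in> normal_cone g r h s y"
proof -
  obtain \<mu>0 \<mu> \<kappa> where "0 \<le> \<mu>0" and \<mu>: "\<forall>i<r. 0 \<le> \<mu> i \<and> (g i y < 0 \<longrightarrow> \<mu> i = 0)"
    and sum1: "\<mu>0 + (\<Sum>i<r. \<mu> i) + (\<Sum>j<s. \<bar>\<kappa> j\<bar>) = 1"
    and eq: "\<mu>0 *\<^sub>R grad f y + (\<Sum>i<r. \<mu> i *\<^sub>R grad (g i) y) + (\<Sum>j<s. \<kappa> j *\<^sub>R grad (h j) y) = 0"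
    using AKKT_point_imp_Fritz_John[OF assms(1-4)] by blast
  have compl: "\<forall>i<r. 0 \<le> \<mu> i \<and> \<mu> i * g i y = 0"
  proof (intro allI impI conjI)
    fix i assume "i < r"
    then show "0 \<le> \<mu> i"
      using \<mu> by blast
    have "g i y \<le> 0"
      using assms(5) \<open>i < r\<close> unfolding feas_def by blast
    then show "\<mu> i * g i y = 0"
      using \<mu> \<open>i < r\<close> by (cases "g i y < 0") auto
  qed
  have "\<mu>0 \<noteq> 0"
  proof
    assume "\<mu>0 = 0"
    then have "(\<forall>i<r. \<mu> i = 0) \<and> (\<forall>j<s. \<kappa> j = 0)"
      using MFCQ_at_multipliers_eq_0[OF assms(6) compl] eq by simp
    then show False
      using sum1 \<open>\<mu>0 = 0\<close> by simp
  qed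
  then have "grad f y + (\<Sum>i<r. (\<mu> i / \<mu>0) *\<^sub>R grad (g i) y) + (\<Sum>j<s. (\<kappa> j / \<mu>0) *\<^sub>R grad (h j) y)
      = (1 / \<mu>0) *\<^sub>R (\<mu>0 *\<^sub>R grad f y + (\<Sum>i<r. \<mu> i *\<^sub>R grad (g i) y) + (\<Sum>j<s. \<kappa> j *\<^sub>R grad (h j) y))"
    by (simp add: scaleR_add_right scaleR_sum_right)
  then have "- grad f y = (\<Sum>i<r. (\<mu> i / \<mu>0) *\<^sub>R grad (g i) y) + (\<Sum>j<s. (\<kappa> j / \<mu>0) *\<^sub>R grad (h j) y)"
    unfolding eq by (simp add: neg_eq_iff_add_eq_0 add.assoc)
  moreover have "\<forall>i<r. 0 \<le> \<mu> i / \<mu>0 \<and> \<mu> i / \<mu>0 * g i y = 0"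
    using compl \<open>0 \<le> \<mu>0\<close> by simp
  ultimately show ?thesis
    unfolding normal_cone_def mem_Collect_eq
    by (intro exI[of _ "\<lambda>i. \<mu> i / \<mu>0"] exI[of _ "\<lambda>j. \<kappa> j / \<mu>0"]) simp
qed

lemma local_min_imp_KKT:
  fixes f :: "'a::euclidean_space \<Rightarrow> real"
  assumes "C1_fun f" "\<forall>i<r. C1_fun (g i)" "\<forall>j<s. C1_fun (h j)"
    and "y \<in> feas g r h s" "MFCQ_at g r h s y"
    and "0 < \<delta>" "\<forall>z \<in> feas g r h s \<inter> cball y \<delta>. f y \<le> f z"
  shows "- grad f y \<in> normal_cone g r h s y"
  using local_min_imp_AKKT_point[OF assms(1-4,6,7)] assms(1-5)
  by (rule AKKT_point_MFCQ_at_imp_KKT)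

lemma partial_grad_at_maximizer_in_normal_cone:
  fixes \<phi> :: "'a::euclidean_space \<times> 'b::euclidean_space \<Rightarrow> real"
  assumes "C1_fun \<phi>" "\<forall>i<r. C1_fun (g i)" "\<forall>j<s. C1_fun (h j)"
    and "MFCQ_at g r h s y" "y \<in> maximizers (\<lambda>y. \<phi> (x, y)) (feas g r h s)"
  shows "snd (grad \<phi> (x, y)) \<in> normal_cone g r h s y"
proof -
  have "C1_fun (\<lambda>y. - \<phi> (x, y))"
    using assms(1) by (intro C1_fun_minus C1_fun_Pair_right)
  moreover have "grad (\<lambda>y. - \<phi> (x, y)) y = - snd (grad \<phi> (x, y))"
    using assms(1) by (intro grad_eqI GDERIV_minus gderiv_Pair_right C1_fun_gderiv)
  moreover have "\<forall>z \<in> feas g r h s \<inter> cball y 1. - \<phi> (x, y) \<le> - \<phi> (x, z)"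
    using assms(5) unfolding maximizers_def by simp
  ultimately show ?thesis
    using local_min_imp_KKT[of "\<lambda>y. - \<phi> (x, y)", OF _ assms(2,3) _ assms(4) zero_less_one] assms(5)
    unfolding maximizers_def by simp
qed

lemma clarke_subdiff_SUP_subset:
  fixes \<phi> :: "'a::euclidean_space \<times> 'b::euclidean_space \<Rightarrow> real"
  assumes "C1_fun \<phi>" "\<forall>i<r. C1_fun (g i)" "\<forall>j<s. C1_fun (h j)" "MFCQ g r h s"
    and "\<And>x. maximizers (\<lambda>y. \<phi> (x, y)) (feas g r h s) \<noteq> {}"
    and "\<And>B. bounded B \<Longrightarrow> bounded (\<Union>x \<in> B. maximizers (\<lambda>y. \<phi> (x, y)) (feas g r h s))"
    and "\<And>x. \<psi> x = (SUP y \<in> feas g r h s. \<phi> (x, y))"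
  shows "clarke_subdiff \<psi> x \<subseteq> convex hull (\<Union>y \<in> {y \<in> feas g r h s. \<psi> x = \<phi> (x, y)}.
           {v. \<exists>w \<in> normal_cone g r h s y. (v, 0) = grad \<phi> (x, y) - (0, w)})"
  unfolding clarke_subdiff_def
proof (rule hull_mono, safe)
  fix v xs gs
  assume xs: "xs \<longlonglongrightarrow> x" and gs: "\<forall>k. GDERIV \<psi> (xs k) :> gs k" and lim_gs: "gs \<longlonglongrightarrow> v"
  have "closed (feas g r h s)"
    using assms(2,3) by (intro closed_feas) (auto intro: C1_fun_continuous_on)
  then obtain y where y: "y \<in> maximizers (\<lambda>y. \<phi> (x, y)) (feas g r h s)" and v_eq: "v = fst (grad \<phi> (x, y))"
    using limit_of_gradients_of_SUP[OF assms(1) _ assms(5,6,7) xs gs[rule_format] lim_gs] by blast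
  have "y \<in> feas g r h s" "\<psi> x = \<phi> (x, y)"
    using y SUP_eq_maximizer[OF y] assms(7) unfolding maximizers_def by auto
  moreover have "snd (grad \<phi> (x, y)) \<in> normal_cone g r h s y"
    using partial_grad_at_maximizer_in_normal_cone[OF assms(1-3) _ y] MFCQ_imp_MFCQ_at[OF assms(4)]
      \<open>y \<in> feas g r h s\<close> by blast
  moreover have "(v, 0) = grad \<phi> (x, y) - (0, snd (grad \<phi> (x, y)))"
    using v_eq by (simp add: prod_eq_iff)
  ultimately show "v \<in> (\<Union>y \<in> {y \<in> feas g r h s. \<psi> x = \<phi> (x, y)}.
      {v. \<exists>w \<in> normal_cone g r h s y. (v, 0) = grad \<phi> (x, y) - (0, w)})"
    by blast
qed

theorem lemma3p6:
  fixes F :: "real^'n \<Rightarrow> real^'n"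
    and g h :: "nat \<Rightarrow> real^'n \<Rightarrow> real"
    and r s :: nat and \<rho> :: real
    and \<phi> :: "(real^'n) \<times> (real^'n) \<Rightarrow> real" and \<psi> :: "real^'n \<Rightarrow> real"
  assumes "poly_map F"
    and "\<forall>i<r. g i \<in> poly_fun" and "\<forall>j<s. h j \<in> poly_fun"
    and "feas g r h s \<noteq> {}"
    and "\<rho> > 0"
    and "\<And>x y. \<phi> (x, y) = F x \<bullet> (x - y) - \<rho> / 2 * (norm (x - y))\<^sup>2"
    and "\<And>x. \<psi> x = (SUP y \<in> feas g r h s. \<phi> (x, y))"
    and "MFCQ g r h s"
  shows "clarke_subdiff \<psi> x \<subseteq> convex hull (\<Union>y \<in> {y \<in> feas g r h s. \<psi> x = \<phi> (x, y)}.
           {v. \<exists>w \<in> normal_cone g r h s y. (v, 0) = grad \<phi> (x, y) - (0, w)})"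
proof (rule clarke_subdiff_SUP_subset[OF _ _ _ assms(8) _ _ assms(7)])
  show g: "\<forall>i<r. C1_fun (g i)" and h: "\<forall>j<s. C1_fun (h j)"
    using assms(2,3) C1_fun_poly_fun by blast+
  have F: "C1_fun (\<lambda>x. F x $ i)" for i
    using assms(1) C1_fun_poly_fun unfolding poly_map_def by blast
  have \<phi>: "\<phi> = (\<lambda>z. reg_gap F \<rho> (fst z) (snd z))"
    using assms(6) by (auto simp: fun_eq_iff reg_gap_def)
  then show "C1_fun \<phi>"
    using C1_fun_reg_gap[OF F] by simp
  obtain y0 where y0: "y0 \<in> feas g r h s"
    using assms(4) by blast
  have "closed (feas g r h s)"
    using g h by (intro closed_feas) (auto intro: C1_fun_continuous_on)
  then show "maximizers (\<lambda>y. \<phi> (x', y)) (feas g r h s) \<noteq> {}" for x'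
    unfolding \<phi> using maximizers_reg_gap_nonempty[OF assms(5) _ y0] by simp
  have "continuous_on UNIV (\<lambda>x. \<chi> i. F x $ i)"
    by (intro continuous_on_vec_lambda C1_fun_continuous_on F)
  then show "bounded (\<Union>x \<in> B. maximizers (\<lambda>y. \<phi> (x, y)) (feas g r h s))" if "bounded B" for B
    unfolding \<phi> using maximizers_reg_gap_bounded[OF assms(5) y0 _ that] by simp
qed

end
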